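(* Let $A,B\in M_\ell(F)$ commute, let $Q=\mathrm{CSS}(H_X,H_Z)$ with $H_X=(A\ \ B)$, $H_Z=(B^T\ \ -A^T)$ be the two-block code, and fix idempotents $E_A,F_A$ associated with $A$ and $E_B,F_B$ associated with $B$. Define $$H_X^{(L)}=\begin{pmatrix}A&B\\0&I-E_A\end{pmatrix},\qquad H_X^{(R)}=\begin{pmatrix}A&B\\ I-E_B&0\end{pmatrix},$$ $Q'_\mu=\mathrm{CSS}(H_X^{(\mu)},H_Z)$ for $\mu\in\{L,R\}$; $Q''_L=\mathrm{CSS}(A,(H_Z)_L)$ with $(H_Z)_L=(B(I-F_A))^T$ and $Q''_R=\mathrm{CSS}(B,(H_Z)_R)$ with $(H_Z)_R=(A(I-F_B))^T$ (all of these are stabilizer CSS codes, i.e., the orthogonality condition holds); and classical codes $C_L=\{u\in F^\ell: Au=0,\ E_Bu=0\}$ and $C_R=\{u\in F^\ell: Bu=0,\ E_Au=0\}$ (the codes with parity-check matrices $\binom{A}{E_B}$ and $\binom{B}{E_A}$). Then for each $\mu\in\{L,R\}$, $$d_Z(Q)\le d_Z(Q'_\mu)\le d_Z(Q''_\mu)\le d(C_\mu).$$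
   Context: $F=\mathbb F_q$ is a finite field. For a matrix $H$ with $n$ columns, $C_H$ is its row space and $C_H^\perp$ its orthogonal complement in $F^n$. For $H_X,H_Z$ with $H_XH_Z^T=0$, $\mathrm{CSS}(H_X,H_Z)$ has $Z$-distance $d_Z=\min\{\mathrm{wgt}(c):c\in C_{H_X}^\perp\setminus C_{H_Z}\}$, where $\mathrm{wgt}$ is the Hamming weight and the minimum of the empty set is $\infty$. For a classical linear code $C$, $d(C)$ is the minimum weight of a nonzero codeword ($\infty$ if $C=\{0\}$). Idempotents associated with a matrix $A$: any $E_A,F_A$ with $E_A^2=E_A$, $F_A^2=F_A$, $\mathrm{rank}E_A=\mathrm{rank}F_A=\mathrm{rank}A$, $E_AA=AF_A=A$; similarly $E_B,F_B$ for $B$. *)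

theory Defs
  imports "Jordan_Normal_Form.DL_Rank" "HOL-Library.Extended_Nat"
begin

definition wgt :: "'a::zero vec \<Rightarrow> nat" where
  "wgt v = card {i. i < dim_vec v \<and> v $ i \<noteq> 0}"

definition row_space :: "'a::comm_ring_1 mat \<Rightarrow> 'a vec set" where
  "row_space H = {v. \<exists>c \<in> carrier_vec (dim_row H). v = transpose_mat H *\<^sub>v c}"

definition orth_compl :: "nat \<Rightarrow> 'a::comm_ring_1 vec set \<Rightarrow> 'a vec set" where
  "orth_compl n C = {v \<in> carrier_vec n. \<forall>w \<in> C. w \<bullet> v = 0}"

text \<open>Z-distance of CSS(HX, HZ); the infimum of the empty set is \<infinity>.\<close>
definition dZ :: "'a::comm_ring_1 mat \<Rightarrow> 'a mat \<Rightarrow> enat" where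
  "dZ HX HZ = Inf ((\<lambda>c. enat (wgt c)) ` (orth_compl (dim_col HX) (row_space HX) - row_space HZ))"

text \<open>Minimum distance of a classical linear code (\<infinity> for the zero code).\<close>
definition min_dist :: "nat \<Rightarrow> 'a::zero vec set \<Rightarrow> enat" where
  "min_dist n C = Inf ((\<lambda>c. enat (wgt c)) ` (C - {0\<^sub>v n}))"

definition hcat :: "'a mat \<Rightarrow> 'a mat \<Rightarrow> 'a mat" where
  "hcat A B = mat (dim_row A) (dim_col A + dim_col B)
     (\<lambda>(i,j). if j < dim_col A then A $$ (i,j) else B $$ (i, j - dim_col A))"

definition assoc_idempotents :: "nat \<Rightarrow> 'a::field mat \<Rightarrow> 'a mat \<Rightarrow> 'a mat \<Rightarrow> bool" where
  "assoc_idempotents l A E F \<longleftrightarrow>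
     E \<in> carrier_mat l l \<and> F \<in> carrier_mat l l \<and>
     E * E = E \<and> F * F = F \<and>
     vec_space.rank l E = vec_space.rank l A \<and> vec_space.rank l F = vec_space.rank l A \<and>
     E * A = A \<and> A * F = A"

end

theory Submission
  imports Defs "Jordan_Normal_Form.Matrix_Kernel"
begin

(*
  Each inequality maps the Z-logicals of the code on the right weight-preservingly to Z-logicals
  of the code on the left. Adding rows to H_X only shrinks its kernel, which gives
  d_Z(Q) <= d_Z(Q'). A logical x of Q''_L (Ax = 0, x outside the column space of B(I - F_A))
  pads to (x, 0), which H_X^(L) annihilates; were (x, 0) = (Bc, -Ac) a row of H_Z, then
  c in ker A = ker F_A and so x = B(I - F_A)c. The equality ker A = ker F_A is where
  rank F_A = rank A enters: A maps the column space of F_A onto that of A, and equal dimensions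
  force this map to be injective. Finally a nonzero u in C_L is a logical of Q''_L, since E_B
  fixes the column space of B but kills u. The case R is symmetric, padding on the left.
*)

lemma (in linear_map) kerT_trivial_if_dim_eq:
  assumes fin: "V.fin_dim" and surj: "imT = carrier W" and dim: "W.dim = V.dim"
    and fin_ker: "vectorspace.fin_dim K (V.vs kerT)"
  shows "kerT = {\<zero>\<^bsub>V\<^esub>}"
proof -
  interpret ker: vectorspace K "V.vs kerT"
    using kerT_is_subspace V.subspace_is_vs by blast
  have "ker.dim = 0"
    using rank_nullity[OF fin] surj dim by simp
  moreover obtain \<beta> where \<beta>: "finite \<beta>" "ker.basis \<beta>"
    using ker.finite_basis_exists[OF fin_ker] by blast
  ultimately have "\<beta> = {}"
    using ker.dim_basis by simp
  then show ?thesis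
    using \<beta>(2) ker.span_empty unfolding ker.basis_def by simp
qed

lemma finite_carrier_vec: "finite (carrier_vec n :: 'a::finite vec set)"
proof -
  have "carrier_vec n \<subseteq> vec_of_list ` {xs :: 'a list. set xs \<subseteq> UNIV \<and> length xs = n}"
  proof
    fix v :: "'a vec" assume "v \<in> carrier_vec n"
    then show "v \<in> vec_of_list ` {xs. set xs \<subseteq> UNIV \<and> length xs = n}"
      by (intro image_eqI[of _ _ "list_of_vec v"]) (auto simp: vec_list)
  qed
  then show ?thesis
    by (rule finite_subset) (intro finite_imageI finite_lists_length_eq; simp)
qed

lemma (in vectorspace) fin_dim_if_finite_carrier:
  assumes "finite (carrier V)"
  shows "fin_dim"
  unfolding fin_dim_def
  using assms span_is_subset2[of "carrier V"] in_own_span[of "carrier V"] by auto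

lemma (in vec_space) col_space_mult_vec:
  assumes "A \<in> carrier_mat n n"
  shows "col_space A = (\<lambda>x. A *\<^sub>v x) ` carrier_vec n"
  using col_space_eq[OF assms] assms by auto

lemma (in vec_space) linear_map_mult_mat_vec_col_space:
  assumes A: "A \<in> carrier_mat n n" and F: "F \<in> carrier_mat n n" and AF: "A * F = A"
  shows "linear_map class_ring (vs (col_space F)) (vs (col_space A)) (\<lambda>v. A *\<^sub>v v)"
    and "(\<lambda>v. A *\<^sub>v v) ` col_space F = col_space A"
proof -
  have sub: "VectorSpace.subspace class_ring (col_space M) V" if "M \<in> carrier_mat n n" for M
    unfolding col_space_def using that cols_dim by (intro span_is_subspace) fastforce
  have "(\<lambda>v. A *\<^sub>v v) \<in> LinearCombinations.module_hom class_ring (vs (col_space F)) (vs (col_space A))"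
    unfolding LinearCombinations.module_hom_def using A F
    by (auto simp: col_space_mult_vec mult_add_distrib_mat_vec mult_mat_vec)
  then show "linear_map class_ring (vs (col_space F)) (vs (col_space A)) (\<lambda>v. A *\<^sub>v v)"
    unfolding linear_map_def mod_hom_def mod_hom_axioms_def
    using subspace_is_vs[OF sub[OF F]] subspace_is_vs[OF sub[OF A]] vectorspace.axioms by blast
  have "A *\<^sub>v (F *\<^sub>v x) = A *\<^sub>v x" if "x \<in> carrier_vec n" for x
    using A F AF that by (metis assoc_mult_mat_vec)
  then show "(\<lambda>v. A *\<^sub>v v) ` col_space F = col_space A"
    using A F by (auto simp: col_space_mult_vec image_image intro: rev_image_eqI)
qed

(* Finiteness of the field only serves to make the kernel visibly finite-dimensional. *)
lemma mat_kernel_subset_if_rank_eq: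
  fixes A F :: "'a::{finite,field} mat"
  assumes A: "A \<in> carrier_mat n n" and F: "F \<in> carrier_mat n n"
    and AF: "A * F = A" and rank: "vec_space.rank n F = vec_space.rank n A"
  shows "mat_kernel A \<subseteq> mat_kernel F"
proof
  interpret vec_space "TYPE('a)" n .
  interpret T: linear_map class_ring "vs (col_space F)" "vs (col_space A)" "\<lambda>v. A *\<^sub>v v"
    by (rule linear_map_mult_mat_vec_col_space(1)[OF A F AF])
  interpret ker: vectorspace class_ring "T.V.vs T.kerT"
    using T.kerT_is_subspace T.V.subspace_is_vs by blast
  have "T.kerT \<subseteq> carrier_vec n"
    unfolding T.ker_def using F by (auto simp: col_space_mult_vec)
  then have "finite T.kerT"
    using finite_carrier_vec finite_subset by blast
  have im: "T.imT = carrier (vs (col_space A))"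
    using linear_map_mult_mat_vec_col_space(2)[OF A F AF] by (simp add: T.im_def)
  have "T.kerT = {\<zero>\<^bsub>vs (col_space F)\<^esub>}"
  proof (rule T.kerT_trivial_if_dim_eq[OF _ im])
    show "T.V.fin_dim" "T.W.dim = T.V.dim"
      using fin_dim_span_cols[OF F] rank unfolding rank_def col_space_def by simp_all
    show "ker.fin_dim"
      using \<open>finite T.kerT\<close> by (intro ker.fin_dim_if_finite_carrier) simp
  qed
  then have ker_trivial: "T.kerT = {0\<^sub>v n}"
    by simp
  fix c assume "c \<in> mat_kernel A"
  then have c: "c \<in> carrier_vec n" "A *\<^sub>v c = 0\<^sub>v n"
    using mat_kernelD[OF A] by auto
  have "A *\<^sub>v (F *\<^sub>v c) = 0\<^sub>v n"
    using A F AF c by (metis assoc_mult_mat_vec)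
  then have "F *\<^sub>v c \<in> T.kerT"
    unfolding T.ker_def using F c by (auto simp: col_space_mult_vec)
  then show "c \<in> mat_kernel F"
    using ker_trivial F c by (auto intro: mat_kernelI)
qed

lemma mult_mat_zero_vec [simp]:
  fixes A :: "'a::comm_ring_1 mat"
  shows "A \<in> carrier_mat nr nc \<Longrightarrow> A *\<^sub>v 0\<^sub>v nc = 0\<^sub>v nr"
  by (intro eq_vecI) (auto simp: scalar_prod_def)

lemma zero_mat_mult_vec [simp]:
  fixes v :: "'a::comm_ring_1 vec"
  shows "v \<in> carrier_vec nc \<Longrightarrow> 0\<^sub>m nr nc *\<^sub>v v = 0\<^sub>v nr"
  by (intro eq_vecI) (auto simp: scalar_prod_def)

lemma orth_compl_row_space:
  fixes H :: "'a::comm_ring_1 mat"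
  assumes H: "H \<in> carrier_mat m n"
  shows "orth_compl n (row_space H) = mat_kernel H"
proof (intro subset_antisym subsetI)
  fix v assume "v \<in> orth_compl n (row_space H)"
  then have v: "v \<in> carrier_vec n" and orth: "\<And>w. w \<in> row_space H \<Longrightarrow> w \<bullet> v = 0"
    unfolding orth_compl_def by auto
  have "H *\<^sub>v v = 0\<^sub>v m"
  proof (rule eq_vecI)
    fix i assume "i < dim_vec (0\<^sub>v m :: 'a vec)"
    then have i: "i < m" by simp
    have "transpose_mat H *\<^sub>v unit_vec m i \<in> row_space H"
      unfolding row_space_def using H by auto
    then have "unit_vec m i \<bullet> (H *\<^sub>v v) = 0"
      using orth transpose_vec_mult_scalar[OF H v, of "unit_vec m i"] i by simp
    then show "(H *\<^sub>v v) $ i = 0\<^sub>v m $ i"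
      using i H v by simp
  qed (use H in simp)
  then show "v \<in> mat_kernel H"
    by (rule mat_kernelI[OF H v])
next
  fix v assume "v \<in> mat_kernel H"
  then have v: "v \<in> carrier_vec n" and Hv: "H *\<^sub>v v = 0\<^sub>v m"
    using mat_kernelD[OF H] by auto
  have "w \<bullet> v = 0" if w: "w \<in> row_space H" for w
  proof -
    obtain c where "c \<in> carrier_vec m" "w = transpose_mat H *\<^sub>v c"
      using w H unfolding row_space_def by auto
    then show ?thesis
      using transpose_vec_mult_scalar[OF H v] Hv by simp
  qed
  then show "v \<in> orth_compl n (row_space H)"
    unfolding orth_compl_def using v by blast
qed

lemma mult_vec_in_row_space_transpose:
  assumes "M \<in> carrier_mat k n" and "c \<in> carrier_vec n"
  shows "M *\<^sub>v c \<in> row_space (transpose_mat M)"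
  unfolding row_space_def using assms by auto

lemma fixes_row_space_transpose_mult:
  fixes E B N :: "'a::comm_ring_1 mat"
  assumes E: "E \<in> carrier_mat m m" and B: "B \<in> carrier_mat m n" and N: "N \<in> carrier_mat n p"
    and EB: "E * B = B" and u: "u \<in> row_space (transpose_mat (B * N))"
  shows "E *\<^sub>v u = u"
proof -
  obtain c where c: "c \<in> carrier_vec p" and "u = B *\<^sub>v (N *\<^sub>v c)"
    using u B N unfolding row_space_def by auto
  then show ?thesis
    using E B N EB by (metis assoc_mult_mat_vec mult_mat_vec_carrier)
qed

lemma kernel_mult_vec_in_row_space:
  fixes A F M :: "'a::{finite,field} mat"
  assumes A: "A \<in> carrier_mat n n" and F: "F \<in> carrier_mat n n" and M: "M \<in> carrier_mat k n"
    and AF: "A * F = A" and rank: "vec_space.rank n F = vec_space.rank n A"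
    and c: "c \<in> mat_kernel A"
  shows "M *\<^sub>v c \<in> row_space (transpose_mat (M * (1\<^sub>m n - F)))"
proof -
  have c_carrier: "c \<in> carrier_vec n"
    using c mat_kernel_carrier[OF A] by auto
  have "F *\<^sub>v c = 0\<^sub>v n"
    using mat_kernel_subset_if_rank_eq[OF A F AF rank] c mat_kernelD[OF F] by auto
  then have "(1\<^sub>m n - F) *\<^sub>v c = c"
    using F c_carrier by (simp add: minus_mult_distrib_mat_vec[of _ n n])
  then have "M *\<^sub>v c = (M * (1\<^sub>m n - F)) *\<^sub>v c"
    using M F c_carrier by (metis assoc_mult_mat_vec minus_carrier_mat)
  moreover have "M * (1\<^sub>m n - F) \<in> carrier_mat k n"
    using M F by (metis minus_carrier_mat mult_carrier_mat)
  ultimately show ?thesis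
    using mult_vec_in_row_space_transpose c_carrier by metis
qed

lemma hcat_carrier:
  "A \<in> carrier_mat r n1 \<Longrightarrow> B \<in> carrier_mat r n2 \<Longrightarrow> hcat A B \<in> carrier_mat r (n1 + n2)"
  unfolding hcat_def by auto

lemma hcat_mult_vec:
  fixes A :: "'a::comm_ring_1 mat"
  assumes A: "A \<in> carrier_mat r n1" and B: "B \<in> carrier_mat r n2"
    and x: "x \<in> carrier_vec n1" and y: "y \<in> carrier_vec n2"
  shows "hcat A B *\<^sub>v (x @\<^sub>v y) = A *\<^sub>v x + B *\<^sub>v y"
proof (rule eq_vecI)
  fix i assume "i < dim_vec (A *\<^sub>v x + B *\<^sub>v y)"
  then have i: "i < r" using B by simp
  have "row (hcat A B) i = row A i @\<^sub>v row B i"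
    using A B i by (intro eq_vecI) (auto simp: hcat_def)
  then show "(hcat A B *\<^sub>v (x @\<^sub>v y)) $ i = (A *\<^sub>v x + B *\<^sub>v y) $ i"
    using A B x y i hcat_carrier[OF A B] by (simp add: scalar_prod_append[of _ n1 _ n2])
qed (use A B hcat_carrier[OF A B] in auto)

lemma transpose_hcat_mult_vec:
  fixes X :: "'a::comm_ring_1 mat"
  assumes X: "X \<in> carrier_mat r n1" and Y: "Y \<in> carrier_mat r n2" and c: "c \<in> carrier_vec r"
  shows "transpose_mat (hcat X Y) *\<^sub>v c = (transpose_mat X *\<^sub>v c) @\<^sub>v (transpose_mat Y *\<^sub>v c)"
proof (rule eq_vecI)
  fix i assume "i < dim_vec ((transpose_mat X *\<^sub>v c) @\<^sub>v (transpose_mat Y *\<^sub>v c))"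
  then show "(transpose_mat (hcat X Y) *\<^sub>v c) $ i
      = ((transpose_mat X *\<^sub>v c) @\<^sub>v (transpose_mat Y *\<^sub>v c)) $ i"
    using X Y c hcat_carrier[OF X Y]
    by (auto simp: hcat_def mult_mat_vec_def scalar_prod_def row_def col_def)
qed (use X Y hcat_carrier[OF X Y] in auto)

lemma append_in_row_space_hcat:
  fixes X :: "'a::comm_ring_1 mat"
  assumes X: "X \<in> carrier_mat r n1" and Y: "Y \<in> carrier_mat r n2"
    and x: "x \<in> carrier_vec n1" and y: "y \<in> carrier_vec n2"
  shows "x @\<^sub>v y \<in> row_space (hcat X Y) \<longleftrightarrow>
    (\<exists>c \<in> carrier_vec r. x = transpose_mat X *\<^sub>v c \<and> y = transpose_mat Y *\<^sub>v c)"
  using X Y x y hcat_carrier[OF X Y]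
  by (auto simp: row_space_def transpose_hcat_mult_vec append_vec_eq[of x n1])

lemma mat_kernel_four_block_subset_hcat:
  fixes A :: "'a::comm_ring_1 mat"
  assumes A: "A \<in> carrier_mat nr1 nc1" and B: "B \<in> carrier_mat nr1 nc2"
    and C: "C \<in> carrier_mat nr2 nc1" and D: "D \<in> carrier_mat nr2 nc2"
  shows "mat_kernel (four_block_mat A B C D) \<subseteq> mat_kernel (hcat A B)"
proof
  fix v assume v: "v \<in> mat_kernel (four_block_mat A B C D)"
  define x y where "x = vec_first v nc1" and "y = vec_last v nc2"
  have v_carrier: "v \<in> carrier_vec (nc1 + nc2)"
    using v mat_kernel_carrier[OF four_block_carrier_mat[OF A D]] by auto
  then have xy: "x \<in> carrier_vec nc1" "y \<in> carrier_vec nc2" "v = x @\<^sub>v y"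
    unfolding x_def y_def by auto
  have "(A *\<^sub>v x + B *\<^sub>v y) @\<^sub>v (C *\<^sub>v x + D *\<^sub>v y) = 0\<^sub>v nr1 @\<^sub>v 0\<^sub>v nr2"
    using mat_kernelD(2)[OF four_block_carrier_mat[OF A D] v]
    by (auto simp: xy(3) four_block_mat_mult_vec[OF A B C D xy(1,2)])
  then have "hcat A B *\<^sub>v v = 0\<^sub>v nr1"
    using A B xy by (simp add: hcat_mult_vec append_vec_eq[of _ nr1])
  then show "v \<in> mat_kernel (hcat A B)"
    using hcat_carrier[OF A B] v_carrier by (rule mat_kernelI[rotated 2])
qed

lemma wgt_append_zero_vec: "wgt (x @\<^sub>v 0\<^sub>v k) = wgt x"
proof -
  have "{i. i < dim_vec (x @\<^sub>v 0\<^sub>v k) \<and> (x @\<^sub>v 0\<^sub>v k) $ i \<noteq> 0} = {i. i < dim_vec x \<and> x $ i \<noteq> 0}"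
    by (auto split: if_splits)
  then show ?thesis unfolding wgt_def by simp
qed

lemma wgt_zero_vec_append: "wgt (0\<^sub>v k @\<^sub>v y) = wgt y"
proof -
  have "{i. i < dim_vec (0\<^sub>v k @\<^sub>v y) \<and> (0\<^sub>v k @\<^sub>v y) $ i \<noteq> 0}
      = (\<lambda>i. i + k) ` {i. i < dim_vec y \<and> y $ i \<noteq> 0}"
  proof (intro subset_antisym subsetI)
    fix i assume "i \<in> {i. i < dim_vec (0\<^sub>v k @\<^sub>v y) \<and> (0\<^sub>v k @\<^sub>v y) $ i \<noteq> 0}"
    then show "i \<in> (\<lambda>i. i + k) ` {i. i < dim_vec y \<and> y $ i \<noteq> 0}"
      by (intro image_eqI[of _ _ "i - k"]) (auto split: if_splits)
  qed auto
  then show ?thesis unfolding wgt_def by (simp add: card_image)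
qed

lemma dZ_hcat_le_four_block:
  fixes A :: "'a::comm_ring_1 mat"
  assumes A: "A \<in> carrier_mat nr1 nc1" and B: "B \<in> carrier_mat nr1 nc2"
    and C: "C \<in> carrier_mat nr2 nc1" and D: "D \<in> carrier_mat nr2 nc2"
  shows "dZ (hcat A B) HZ \<le> dZ (four_block_mat A B C D) HZ"
proof -
  have "orth_compl (nc1 + nc2) (row_space (four_block_mat A B C D))
      \<subseteq> orth_compl (nc1 + nc2) (row_space (hcat A B))"
    using mat_kernel_four_block_subset_hcat[OF A B C D]
    by (simp add: orth_compl_row_space[OF four_block_carrier_mat[OF A D]]
        orth_compl_row_space[OF hcat_carrier[OF A B]])
  then show ?thesis
    unfolding dZ_def using A D hcat_carrier[OF A B]
    by (intro Inf_superset_mono image_mono Diff_mono) auto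
qed

lemma dZ_le_min_dist:
  fixes A :: "'a::comm_ring_1 mat"
  assumes A: "A \<in> carrier_mat m n" and E: "E \<in> carrier_mat n n" and B: "B \<in> carrier_mat n n"
    and N: "N \<in> carrier_mat n n" and EB: "E * B = B"
  shows "dZ A (transpose_mat (B * N))
    \<le> min_dist n {u \<in> carrier_vec n. A *\<^sub>v u = 0\<^sub>v m \<and> E *\<^sub>v u = 0\<^sub>v n}"
proof -
  have "{u \<in> carrier_vec n. A *\<^sub>v u = 0\<^sub>v m \<and> E *\<^sub>v u = 0\<^sub>v n} - {0\<^sub>v n}
      \<subseteq> orth_compl (dim_col A) (row_space A) - row_space (transpose_mat (B * N))"
    using fixes_row_space_transpose_mult[OF E B N EB] A
    by (auto simp: orth_compl_row_space[OF A] mat_kernel[OF A])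
  then show ?thesis
    unfolding dZ_def min_dist_def by (intro Inf_superset_mono image_mono)
qed

lemma mult_mat_vec_uminus:
  fixes A :: "'a::comm_ring_1 mat"
  assumes "A \<in> carrier_mat nr nc" "v \<in> carrier_vec nc"
  shows "A *\<^sub>v (- v) = - (A *\<^sub>v v)"
  using assms by (intro eq_vecI) auto

lemma append_in_row_space_two_block:
  fixes A B :: "'a::comm_ring_1 mat"
  assumes A: "A \<in> carrier_mat l l" and B: "B \<in> carrier_mat l l"
    and x: "x \<in> carrier_vec l" and y: "y \<in> carrier_vec l"
  shows "x @\<^sub>v y \<in> row_space (hcat (transpose_mat B) (- transpose_mat A)) \<longleftrightarrow>
    (\<exists>c \<in> carrier_vec l. x = B *\<^sub>v c \<and> y = - (A *\<^sub>v c))"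
  using append_in_row_space_hcat[of "transpose_mat B" l l "- transpose_mat A" l x y] A B x y
  by (simp add: transpose_uminus)

lemma dZ_four_block_le_left:
  fixes A B D F :: "'a::{finite,field} mat"
  assumes A: "A \<in> carrier_mat l l" and B: "B \<in> carrier_mat l l" and D: "D \<in> carrier_mat k l"
    and F: "F \<in> carrier_mat l l" and AF: "A * F = A"
    and rank: "vec_space.rank l F = vec_space.rank l A"
  shows "dZ (four_block_mat A B (0\<^sub>m k l) D) (hcat (transpose_mat B) (- transpose_mat A))
    \<le> dZ A (transpose_mat (B * (1\<^sub>m l - F)))"
  unfolding dZ_def
proof (rule INF_mono)
  let ?HX = "four_block_mat A B (0\<^sub>m k l) D"
  have HX: "?HX \<in> carrier_mat (l + k) (l + l)"
    using A D by auto
  fix x assume "x \<in> orth_compl (dim_col A) (row_space A) - row_space (transpose_mat (B * (1\<^sub>m l - F)))"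
  then have x: "x \<in> mat_kernel A" and x_notin: "x \<notin> row_space (transpose_mat (B * (1\<^sub>m l - F)))"
    using orth_compl_row_space[OF A] A by auto
  have x_carrier: "x \<in> carrier_vec l"
    using x mat_kernel_carrier[OF A] by auto
  have "?HX *\<^sub>v (x @\<^sub>v 0\<^sub>v l) = 0\<^sub>v (l + k)"
    using four_block_mat_mult_vec[OF A B zero_carrier_mat D x_carrier zero_carrier_vec] mat_kernelD(2)[OF A x]
      A B D x_carrier by auto
  then have in_kernel: "x @\<^sub>v 0\<^sub>v l \<in> orth_compl (dim_col ?HX) (row_space ?HX)"
    unfolding carrier_matD(2)[OF HX] orth_compl_row_space[OF HX]
    using x_carrier by (intro mat_kernelI[OF HX]) auto
  have "x @\<^sub>v 0\<^sub>v l \<notin> row_space (hcat (transpose_mat B) (- transpose_mat A))"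
  proof
    assume "x @\<^sub>v 0\<^sub>v l \<in> row_space (hcat (transpose_mat B) (- transpose_mat A))"
    then obtain c where c: "c \<in> carrier_vec l" "x = B *\<^sub>v c" "- (A *\<^sub>v c) = 0\<^sub>v l"
      using append_in_row_space_two_block[OF A B x_carrier] by auto
    then have "c \<in> mat_kernel A"
      using A by (auto intro!: mat_kernelI simp: uminus_zero_vec_eq[of _ l])
    then show False
      using kernel_mult_vec_in_row_space[OF A F B AF rank] x_notin c(2) by simp
  qed
  moreover have "wgt (x @\<^sub>v 0\<^sub>v l) = wgt x"
    by (rule wgt_append_zero_vec)
  ultimately show "\<exists>v \<in> orth_compl (dim_col ?HX) (row_space ?HX)
      - row_space (hcat (transpose_mat B) (- transpose_mat A)). enat (wgt v) \<le> enat (wgt x)"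
    using in_kernel by (intro bexI[of _ "x @\<^sub>v 0\<^sub>v l"]) auto
qed

lemma dZ_four_block_le_right:
  fixes A B C F :: "'a::{finite,field} mat"
  assumes A: "A \<in> carrier_mat l l" and B: "B \<in> carrier_mat l l" and C: "C \<in> carrier_mat k l"
    and F: "F \<in> carrier_mat l l" and BF: "B * F = B"
    and rank: "vec_space.rank l F = vec_space.rank l B"
  shows "dZ (four_block_mat A B C (0\<^sub>m k l)) (hcat (transpose_mat B) (- transpose_mat A))
    \<le> dZ B (transpose_mat (A * (1\<^sub>m l - F)))"
  unfolding dZ_def
proof (rule INF_mono)
  let ?HX = "four_block_mat A B C (0\<^sub>m k l)"
  have HX: "?HX \<in> carrier_mat (l + k) (l + l)"
    using A by auto
  fix y assume "y \<in> orth_compl (dim_col B) (row_space B) - row_space (transpose_mat (A * (1\<^sub>m l - F)))"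
  then have y: "y \<in> mat_kernel B" and y_notin: "y \<notin> row_space (transpose_mat (A * (1\<^sub>m l - F)))"
    using orth_compl_row_space[OF B] B by auto
  have y_carrier: "y \<in> carrier_vec l"
    using y mat_kernel_carrier[OF B] by auto
  have "?HX *\<^sub>v (0\<^sub>v l @\<^sub>v y) = 0\<^sub>v (l + k)"
    using four_block_mat_mult_vec[OF A B C zero_carrier_mat zero_carrier_vec y_carrier] mat_kernelD(2)[OF B y]
      A B C y_carrier by auto
  then have in_kernel: "0\<^sub>v l @\<^sub>v y \<in> orth_compl (dim_col ?HX) (row_space ?HX)"
    unfolding carrier_matD(2)[OF HX] orth_compl_row_space[OF HX]
    using y_carrier by (intro mat_kernelI[OF HX]) auto
  have "0\<^sub>v l @\<^sub>v y \<notin> row_space (hcat (transpose_mat B) (- transpose_mat A))"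
  proof
    assume "0\<^sub>v l @\<^sub>v y \<in> row_space (hcat (transpose_mat B) (- transpose_mat A))"
    then obtain c where c: "c \<in> carrier_vec l" "B *\<^sub>v c = 0\<^sub>v l" "y = - (A *\<^sub>v c)"
      using append_in_row_space_two_block[OF A B _ y_carrier] by auto
    then have "- c \<in> mat_kernel B" "y = A *\<^sub>v (- c)"
      using A B by (auto intro!: mat_kernelI simp: mult_mat_vec_uminus)
    then show False
      using kernel_mult_vec_in_row_space[OF B F A BF rank] y_notin by simp
  qed
  moreover have "wgt (0\<^sub>v l @\<^sub>v y) = wgt y"
    by (rule wgt_zero_vec_append)
  ultimately show "\<exists>v \<in> orth_compl (dim_col ?HX) (row_space ?HX)
      - row_space (hcat (transpose_mat B) (- transpose_mat A)). enat (wgt v) \<le> enat (wgt y)"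
    using in_kernel by (intro bexI[of _ "0\<^sub>v l @\<^sub>v y"]) auto
qed

(* Commutativity of A and B is what makes the codes stabilizer codes; the bounds do not need it. *)
theorem mainTheorem4:
  fixes A B EA FA EB FB :: "'a::{finite,field} mat" and l :: nat
  assumes A: "A \<in> carrier_mat l l" and B: "B \<in> carrier_mat l l"
    and comm: "A * B = B * A"
    and idA: "assoc_idempotents l A EA FA"
    and idB: "assoc_idempotents l B EB FB"
  defines "HX \<equiv> hcat A B"
    and "HZ \<equiv> hcat (transpose_mat B) (- transpose_mat A)"
    and "HXL \<equiv> four_block_mat A B (0\<^sub>m l l) (1\<^sub>m l - EA)"
    and "HXR \<equiv> four_block_mat A B (1\<^sub>m l - EB) (0\<^sub>m l l)"
    and "HZL \<equiv> transpose_mat (B * (1\<^sub>m l - FA))"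
    and "HZR \<equiv> transpose_mat (A * (1\<^sub>m l - FB))"
    and "CL \<equiv> {u \<in> carrier_vec l. A *\<^sub>v u = 0\<^sub>v l \<and> EB *\<^sub>v u = 0\<^sub>v l}"
    and "CR \<equiv> {u \<in> carrier_vec l. B *\<^sub>v u = 0\<^sub>v l \<and> EA *\<^sub>v u = 0\<^sub>v l}"
  shows "dZ HX HZ \<le> dZ HXL HZ \<and> dZ HXL HZ \<le> dZ A HZL \<and> dZ A HZL \<le> min_dist l CL
       \<and> dZ HX HZ \<le> dZ HXR HZ \<and> dZ HXR HZ \<le> dZ B HZR \<and> dZ B HZR \<le> min_dist l CR"
proof -
  from idA have EA: "EA \<in> carrier_mat l l" and FA: "FA \<in> carrier_mat l l"
    and EAA: "EA * A = A" and AFA: "A * FA = A"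
    and rankA: "vec_space.rank l FA = vec_space.rank l A"
    unfolding assoc_idempotents_def by auto
  from idB have EB: "EB \<in> carrier_mat l l" and FB: "FB \<in> carrier_mat l l"
    and EBB: "EB * B = B" and BFB: "B * FB = B"
    and rankB: "vec_space.rank l FB = vec_space.rank l B"
    unfolding assoc_idempotents_def by auto
  have "dZ HX HZ \<le> dZ HXL HZ" "dZ HX HZ \<le> dZ HXR HZ"
    unfolding HX_def HXL_def HXR_def using A B EA EB
    by (auto intro!: dZ_hcat_le_four_block)
  moreover have "dZ HXL HZ \<le> dZ A HZL"
    unfolding HXL_def HZ_def HZL_def using A B EA FA AFA rankA
    by (intro dZ_four_block_le_left) auto
  moreover have "dZ HXR HZ \<le> dZ B HZR"
    unfolding HXR_def HZ_def HZR_def using A B EB FB BFB rankB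
    by (intro dZ_four_block_le_right) auto
  moreover have "dZ A HZL \<le> min_dist l CL" "dZ B HZR \<le> min_dist l CR"
    unfolding HZL_def HZR_def CL_def CR_def using A B EA EB FA FB EAA EBB
    by (auto intro!: dZ_le_min_dist)
  ultimately show ?thesis
    by simp
qed

end
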